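(* Let $(p_1,\alpha^1,\beta^1)$ and $(p_2,\alpha^2,\beta^2)$ be two equilibria with demand maps $D_1,D_2$. For $\mu$-almost every $x$ the following holds: if $D_1(x)=\{d_1(x)\}$ is a singleton, then $d_1(x)\in D_2(x)$; and if moreover $D_2(x)=\{d_2(x)\}$ is a singleton, then $d_1(x)=d_2(x)$.
   Context: Standing setting. $X\subset\mathbb R^{d_1}$, $Y\subset\mathbb R^{d_2}$, $Z_0\subset\mathbb R^{d_3}$ compact; $\mu,\nu$ finite nonnegative Borel measures on $X,Y$. $u$ continuous on a neighbourhood of $X\times Z_0$, differentiable in $x$ with $D_xu$ continuous; $v$ continuous on a neighbourhood of $Y\times Z_0$, differentiable in $y$ with $D_yv$ continuous. $Z=Z_0\cup\{\varnothing_d\}\cup\{\varnothing_s\}$ with two distinct isolated extra points; $u(x,\varnothing_d)=0$, $u(x,\varnothing_s)=-1$, $v(y,\varnothing_s)=0$, $v(y,\varnothing_d)=1$. $b(z)=\max_x u(x,z)$, $a(z)=\min_y v(y,z)$, $Z_1=\{z\in Z:a(z)\le b(z)\}$. A price system is a continuous $p:Z\to\mathbb R$ with $p(\varnothing_d)=p(\varnothing_s)=0$, admissible if $a\le p\le b$ on $Z_1$. $D(x)=\arg\max_{z\in Z}\{u(x,z)-p(z)\}$, $S(y)=\arg\min_{z\in Z}\{v(y,z)-p(z)\}$. A demand (resp. supply) distribution associated with $p$ is a positive Borel measure on $X\times Z$ (resp. $Y\times Z$) carried by the graph of $D$ (resp. $S$) with $X$-marginal $\mu$ (resp. $Y$-marginal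 $\nu$). An equilibrium is $(p,\alpha,\beta)$ with $p$ admissible, $\alpha,\beta$ associated demand and supply distributions, and equal $Z$-marginals on Borel subsets of $Z_0$. $D_i$ is the demand map for $p_i$. *)

theory Defs
  imports "HOL-Analysis.Analysis" "HOL-Probability.Probability"
begin

text \<open>The set of goods Z = Z0 together with two distinct extra points
  NullD (the "no purchase" point) and NullS (the "no sale" point).\<close>
datatype 'c ext = Good 'c | NullD | NullS

definition Zset :: "'c set \<Rightarrow> 'c ext set" where
  "Zset Z0 = Good ` Z0 \<union> {NullD, NullS}"

definition Zmeas :: "('c::topological_space) ext measure" where
  "Zmeas = sigma UNIV {S. Good -` S \<in> sets borel}"

definition uZ :: "('a \<Rightarrow> 'c \<Rightarrow> real) \<Rightarrow> 'a \<Rightarrow> 'c ext \<Rightarrow> real" where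
  "uZ u x z = (case z of Good c \<Rightarrow> u x c | NullD \<Rightarrow> 0 | NullS \<Rightarrow> -1)"

definition vZ :: "('b \<Rightarrow> 'c \<Rightarrow> real) \<Rightarrow> 'b \<Rightarrow> 'c ext \<Rightarrow> real" where
  "vZ v y z = (case z of Good c \<Rightarrow> v y c | NullS \<Rightarrow> 0 | NullD \<Rightarrow> 1)"

definition bfun :: "'a set \<Rightarrow> ('a \<Rightarrow> 'c \<Rightarrow> real) \<Rightarrow> 'c ext \<Rightarrow> real" where
  "bfun X u z = (SUP x\<in>X. uZ u x z)"

definition afun :: "'b set \<Rightarrow> ('b \<Rightarrow> 'c \<Rightarrow> real) \<Rightarrow> 'c ext \<Rightarrow> real" where
  "afun Y v z = (INF y\<in>Y. vZ v y z)"

definition Z1 :: "'a set \<Rightarrow> 'b set \<Rightarrow> 'c set \<Rightarrow> ('a \<Rightarrow> 'c \<Rightarrow> real) \<Rightarrow> ('b \<Rightarrow> 'c \<Rightarrow> real) \<Rightarrow> 'c ext set" where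
  "Z1 X Y Z0 u v = {z \<in> Zset Z0. afun Y v z \<le> bfun X u z}"

definition price_system :: "('c::topological_space) set \<Rightarrow> ('c ext \<Rightarrow> real) \<Rightarrow> bool" where
  "price_system Z0 p \<longleftrightarrow> continuous_on Z0 (p \<circ> Good) \<and> p NullD = 0 \<and> p NullS = 0"

definition admissible ::
  "'a set \<Rightarrow> 'b set \<Rightarrow> ('c::topological_space) set \<Rightarrow> ('a \<Rightarrow> 'c \<Rightarrow> real) \<Rightarrow> ('b \<Rightarrow> 'c \<Rightarrow> real)
    \<Rightarrow> ('c ext \<Rightarrow> real) \<Rightarrow> bool" where
  "admissible X Y Z0 u v p \<longleftrightarrow> price_system Z0 p \<and>
     (\<forall>z \<in> Z1 X Y Z0 u v. afun Y v z \<le> p z \<and> p z \<le> bfun X u z)"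

definition demand_map :: "'c set \<Rightarrow> ('a \<Rightarrow> 'c \<Rightarrow> real) \<Rightarrow> ('c ext \<Rightarrow> real) \<Rightarrow> 'a \<Rightarrow> 'c ext set" where
  "demand_map Z0 u p x = {z \<in> Zset Z0. \<forall>z' \<in> Zset Z0. uZ u x z' - p z' \<le> uZ u x z - p z}"

definition supply_map :: "'c set \<Rightarrow> ('b \<Rightarrow> 'c \<Rightarrow> real) \<Rightarrow> ('c ext \<Rightarrow> real) \<Rightarrow> 'b \<Rightarrow> 'c ext set" where
  "supply_map Z0 v p y = {z \<in> Zset Z0. \<forall>z' \<in> Zset Z0. vZ v y z - p z \<le> vZ v y z' - p z'}"

definition demand_dist ::
  "'a::euclidean_space set \<Rightarrow> 'c::euclidean_space set \<Rightarrow> 'a measure \<Rightarrow> ('a \<Rightarrow> 'c \<Rightarrow> real)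
    \<Rightarrow> ('c ext \<Rightarrow> real) \<Rightarrow> ('a \<times> 'c ext) measure \<Rightarrow> bool" where
  "demand_dist X Z0 \<mu> u p \<alpha> \<longleftrightarrow>
     sets \<alpha> = sets (borel \<Otimes>\<^sub>M Zmeas) \<and>
     (AE xz in \<alpha>. fst xz \<in> X \<and> snd xz \<in> demand_map Z0 u p (fst xz)) \<and>
     distr \<alpha> borel fst = \<mu>"

definition supply_dist ::
  "'b::euclidean_space set \<Rightarrow> 'c::euclidean_space set \<Rightarrow> 'b measure \<Rightarrow> ('b \<Rightarrow> 'c \<Rightarrow> real)
    \<Rightarrow> ('c ext \<Rightarrow> real) \<Rightarrow> ('b \<times> 'c ext) measure \<Rightarrow> bool" where
  "supply_dist Y Z0 \<nu> v p \<beta> \<longleftrightarrow>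
     sets \<beta> = sets (borel \<Otimes>\<^sub>M Zmeas) \<and>
     (AE yz in \<beta>. fst yz \<in> Y \<and> snd yz \<in> supply_map Z0 v p (fst yz)) \<and>
     distr \<beta> borel fst = \<nu>"

definition equilibrium ::
  "'a::euclidean_space set \<Rightarrow> 'b::euclidean_space set \<Rightarrow> 'c::euclidean_space set
    \<Rightarrow> 'a measure \<Rightarrow> 'b measure \<Rightarrow> ('a \<Rightarrow> 'c \<Rightarrow> real) \<Rightarrow> ('b \<Rightarrow> 'c \<Rightarrow> real)
    \<Rightarrow> ('c ext \<Rightarrow> real) \<Rightarrow> ('a \<times> 'c ext) measure \<Rightarrow> ('b \<times> 'c ext) measure \<Rightarrow> bool" where
  "equilibrium X Y Z0 \<mu> \<nu> u v p \<alpha> \<beta> \<longleftrightarrow>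
     admissible X Y Z0 u v p \<and>
     demand_dist X Z0 \<mu> u p \<alpha> \<and>
     supply_dist Y Z0 \<nu> v p \<beta> \<and>
     (\<forall>B \<in> sets borel. B \<subseteq> Z0 \<longrightarrow>
        emeasure \<alpha> (UNIV \<times> Good ` B) = emeasure \<beta> (UNIV \<times> Good ` B))"

definition regular_util :: "'a::euclidean_space set \<Rightarrow> 'c::euclidean_space set \<Rightarrow> ('a \<Rightarrow> 'c \<Rightarrow> real) \<Rightarrow> bool" where
  "regular_util S Z0 f \<longleftrightarrow> (\<exists>U. open U \<and> S \<times> Z0 \<subseteq> U \<and> continuous_on U (\<lambda>(x,z). f x z) \<and>
     (\<exists>Df :: 'a \<times> 'c \<Rightarrow> 'a \<Rightarrow>\<^sub>L real.
        (\<forall>(x,z) \<in> U. ((\<lambda>x'. f x' z) has_derivative blinfun_apply (Df (x,z))) (at x)) \<and>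
        continuous_on U Df))"

end

theory Submission
  imports Defs
begin

(* For a price p let  Phi(p) = int max_z (u(x,z) - p(z)) dmu + int max_z (p(z) - v(y,z)) dnu
   be the dual value, and for demand/supply distributions (alpha, beta) let
   W(alpha,beta) = int u dalpha - int v dbeta  be the welfare.  When alpha and beta have the
   same goods marginal, the price terms cancel and one gets the identity
     gap_D(alpha,p) + gap_S(beta,p) = Phi(p) - W(alpha,beta),
   where the gaps measure the average loss of the agents relative to their optimal choices
   at prices p and are nonnegative.  At an equilibrium both gaps vanish, so Phi(p) = W(alpha,beta).
   Applying the identity crosswise to two equilibria (p1,alpha1,beta1), (p2,alpha2,beta2) gives
   two nonnegative quantities with sum zero; hence alpha2 is carried by the graph of the demand
   map D1 as well as by that of D2.  The set of x with D1(x) and D2(x) intersecting is closed,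
   so it has full mu-measure, and the theorem follows. *)

lemma space_Zmeas [simp]: "space Zmeas = UNIV"
  unfolding Zmeas_def by (simp add: space_measure_of_conv)

lemma Zmeas_setsI: "Good -` S \<in> sets borel \<Longrightarrow> S \<in> sets Zmeas"
  unfolding Zmeas_def by (rule in_measure_of) auto

lemma Zmeas_singleton [measurable]: "{z} \<in> sets (Zmeas :: 'c::t1_space ext measure)"
  by (rule Zmeas_setsI) (cases z, auto simp: vimage_def)

lemma Zmeas_measurableI:
  assumes "(\<lambda>c. h (Good c)) \<in> measurable borel (borel :: 'b::topological_space measure)"
  shows "h \<in> measurable Zmeas (borel :: 'b measure)"
proof (rule measurableI)
  fix A :: "'b set" assume "A \<in> sets borel"
  then have "(\<lambda>c. h (Good c)) -` A \<inter> space borel \<in> sets borel"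
    using assms measurable_sets by blast
  then show "h -` A \<inter> space Zmeas \<in> sets Zmeas"
    by (intro Zmeas_setsI) (simp add: vimage_def)
qed simp

lemma Good_measurable: "Good \<in> measurable (borel :: 'c::topological_space measure) Zmeas"
  unfolding Zmeas_def by (rule measurable_measure_of) auto

(* Coordinate of a genuine good; the value at the extra points is irrelevant. *)
definition the_good :: "'c::zero ext \<Rightarrow> 'c" where
  "the_good z = (case z of Good c \<Rightarrow> c | _ \<Rightarrow> 0)"

lemma the_good_measurable [measurable]:
  "the_good \<in> measurable Zmeas (borel :: 'c::{zero,topological_space} measure)"
  by (rule Zmeas_measurableI) (simp add: the_good_def)

lemma Zset_nonempty: "Zset Z0 \<noteq> {}"
  by (simp add: Zset_def)

lemma Zset_simps [simp]: "Good c \<in> Zset Z0 \<longleftrightarrow> c \<in> Z0" "NullD \<in> Zset Z0" "NullS \<in> Zset Z0"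
  by (auto simp: Zset_def)

definition optimal :: "'c set \<Rightarrow> ('a \<Rightarrow> 'c ext \<Rightarrow> real) \<Rightarrow> 'a \<Rightarrow> 'c ext set" where
  "optimal Z0 f x = {z \<in> Zset Z0. \<forall>z'\<in>Zset Z0. f x z' \<le> f x z}"

lemma demand_map_optimal: "demand_map Z0 u p = optimal Z0 (\<lambda>x z. uZ u x z - p z)"
  by (auto simp: demand_map_def optimal_def)

lemma supply_map_optimal: "supply_map Z0 v p = optimal Z0 (\<lambda>y z. p z - vZ v y z)"
  by (force simp: supply_map_def optimal_def)

definition cont_payoff :: "'a::topological_space set \<Rightarrow> 'c::topological_space set
    \<Rightarrow> ('a \<Rightarrow> 'c ext \<Rightarrow> real) \<Rightarrow> bool" where
  "cont_payoff A Z0 f \<longleftrightarrow> continuous_on (A \<times> Z0) (\<lambda>w. f (fst w) (Good (snd w))) \<and>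
     continuous_on A (\<lambda>x. f x NullD) \<and> continuous_on A (\<lambda>x. f x NullS)"

lemma regular_util_continuous:
  "regular_util S Z0 f \<Longrightarrow> continuous_on (S \<times> Z0) (\<lambda>(x, z). f x z)"
  unfolding regular_util_def by (blast intro: continuous_on_subset)

lemma cont_payoff_uZ:
  "continuous_on (A \<times> Z0) (\<lambda>(x, z). u x z) \<Longrightarrow> cont_payoff A Z0 (uZ u)"
  by (simp add: cont_payoff_def uZ_def split_beta')

lemma cont_payoff_vZ:
  "continuous_on (A \<times> Z0) (\<lambda>(y, z). v y z) \<Longrightarrow> cont_payoff A Z0 (vZ v)"
  by (simp add: cont_payoff_def vZ_def split_beta')

lemma cont_payoff_price:
  assumes "continuous_on Z0 (p \<circ> Good)"
  shows "cont_payoff A Z0 (\<lambda>x z. p z)"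
proof -
  have "continuous_on (A \<times> Z0) (\<lambda>w. (p \<circ> Good) (snd w))"
    by (intro continuous_on_compose2[OF assms, of _ snd]) (auto intro!: continuous_intros)
  then show ?thesis by (simp add: cont_payoff_def)
qed

lemma cont_payoff_diff:
  "cont_payoff A Z0 f \<Longrightarrow> cont_payoff A Z0 g \<Longrightarrow> cont_payoff A Z0 (\<lambda>x z. f x z - g x z)"
  unfolding cont_payoff_def by (auto intro!: continuous_intros)

lemma cont_payoff_at:
  assumes f: "cont_payoff A Z0 f" and z: "z \<in> Zset Z0"
  shows "continuous_on A (\<lambda>x. f x z)"
proof (cases z)
  case (Good c)
  have "continuous_on A (\<lambda>x. (\<lambda>w. f (fst w) (Good (snd w))) (x, c))"
  proof (rule continuous_on_compose2[of "A \<times> Z0"])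
    show "continuous_on (A \<times> Z0) (\<lambda>w. f (fst w) (Good (snd w)))"
      using f by (simp add: cont_payoff_def)
  qed (use z Good in \<open>auto intro!: continuous_intros\<close>)
  then show ?thesis using Good by simp
qed (use f in \<open>auto simp: cont_payoff_def\<close>)

lemma cont_payoff_at_fst:
  "cont_payoff A Z0 f \<Longrightarrow> z \<in> Zset Z0 \<Longrightarrow> continuous_on (A \<times> Z0) (\<lambda>w. f (fst w) z)"
  by (rule continuous_on_compose2[of A "\<lambda>x. f x z" "A \<times> Z0" fst])
    (auto intro!: continuous_intros cont_payoff_at)

lemma cont_payoff_bounded:
  assumes f: "cont_payoff A Z0 f" and A: "compact A" and Z0: "compact Z0"
  obtains B where "\<And>x z. x \<in> A \<Longrightarrow> z \<in> Zset Z0 \<Longrightarrow> \<bar>f x z\<bar> \<le> B"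
proof -
  let ?R = "(\<lambda>w. f (fst w) (Good (snd w))) ` (A \<times> Z0) \<union> (\<lambda>x. f x NullD) ` A \<union> (\<lambda>x. f x NullS) ` A"
  have "bounded ?R"
    using f A Z0 by (intro compact_imp_bounded compact_Un compact_continuous_image)
      (auto simp: cont_payoff_def compact_Times)
  then obtain B where B: "\<And>r. r \<in> ?R \<Longrightarrow> \<bar>r\<bar> \<le> B"
    unfolding bounded_real by blast
  have "\<bar>f x z\<bar> \<le> B" if "x \<in> A" "z \<in> Zset Z0" for x z
  proof (rule B)
    show "f x z \<in> ?R"
      using that by (cases z) (auto intro: image_eqI[of _ _ "(x, case z of Good c \<Rightarrow> c)"])
  qed
  then show ?thesis by (rule that)
qed

lemma closed_all_le:
  assumes S: "closed S" and c: "\<And>k. k \<in> K \<Longrightarrow> continuous_on S (g k)"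
  shows "closed {x\<in>S. \<forall>k\<in>K. g k x \<le> (0::real)}"
proof -
  have "{x\<in>S. \<forall>k\<in>K. g k x \<le> 0} = S \<inter> (\<Inter>k\<in>K. S \<inter> g k -` {..0})" by auto
  also have "closed \<dots>"
    using S c by (intro closed_Int closed_INT ballI continuous_closed_preimage[OF _ S closed_atMost]) auto
  finally show ?thesis .
qed

lemma closed_optimal_at:
  assumes f: "cont_payoff A Z0 f" and A: "closed A" and z: "z \<in> Zset Z0"
  shows "closed {x\<in>A. z \<in> optimal Z0 f x}"
proof -
  have "{x\<in>A. z \<in> optimal Z0 f x} = {x\<in>A. \<forall>z'\<in>Zset Z0. f x z' - f x z \<le> 0}"
    using z by (auto simp: optimal_def)
  also have "closed \<dots>"
    using A cont_payoff_at[OF f] z by (intro closed_all_le) (auto intro!: continuous_intros)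
  finally show ?thesis .
qed

lemma closed_optimal_graph:
  assumes f: "cont_payoff A Z0 f" and A: "closed A" and Z0: "closed Z0"
  shows "closed {w\<in>A \<times> Z0. Good (snd w) \<in> optimal Z0 f (fst w)}"
proof -
  have "{w\<in>A \<times> Z0. Good (snd w) \<in> optimal Z0 f (fst w)} =
      {w\<in>A \<times> Z0. \<forall>z'\<in>Zset Z0. f (fst w) z' - f (fst w) (Good (snd w)) \<le> 0}"
    by (auto simp: optimal_def)
  also have "closed \<dots>"
    using A Z0 f cont_payoff_at_fst[OF f]
    by (intro closed_all_le closed_Times) (auto simp: cont_payoff_def intro!: continuous_intros)
  finally show ?thesis .
qed

(* The agents having a choice that is optimal for two payoffs form a closed set:
   the extra points are handled one by one, genuine goods by projecting a compact set. *)
lemma closed_common_optimal: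
  fixes A :: "'a::t2_space set" and Z0 :: "'c::t2_space set"
  assumes f: "cont_payoff A Z0 f" and g: "cont_payoff A Z0 g" and A: "compact A" and Z0: "compact Z0"
  shows "closed {x\<in>A. optimal Z0 f x \<inter> optimal Z0 g x \<noteq> {}}"
proof -
  have cl: "closed A" "closed Z0" using A Z0 by (auto intro: compact_imp_closed)
  define C where "C = {w\<in>A \<times> Z0. Good (snd w) \<in> optimal Z0 f (fst w)} \<inter>
                      {w\<in>A \<times> Z0. Good (snd w) \<in> optimal Z0 g (fst w)}"
  define N where "N z = {x\<in>A. z \<in> optimal Z0 f x} \<inter> {x\<in>A. z \<in> optimal Z0 g x}" for z
  have "closed C"
    unfolding C_def using cl by (intro closed_Int closed_optimal_graph f g)
  then have "compact ((A \<times> Z0) \<inter> C)"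
    using A Z0 by (intro compact_Int_closed compact_Times)
  moreover have "(A \<times> Z0) \<inter> C = C" by (auto simp: C_def)
  ultimately have "compact C" by simp
  then have closed_C: "closed (fst ` C)"
    by (intro compact_imp_closed compact_continuous_image continuous_on_fst continuous_on_id)
  have closed_N: "closed (N z)" if "z \<in> Zset Z0" for z
    unfolding N_def using that cl by (intro closed_Int closed_optimal_at f g)
  have "{x\<in>A. optimal Z0 f x \<inter> optimal Z0 g x \<noteq> {}} = N NullD \<union> N NullS \<union> fst ` C"
  proof (intro equalityI subsetI)
    fix x assume "x \<in> {x\<in>A. optimal Z0 f x \<inter> optimal Z0 g x \<noteq> {}}"
    then obtain z where "x \<in> A" and z: "z \<in> optimal Z0 f x" "z \<in> optimal Z0 g x" by blast
    then show "x \<in> N NullD \<union> N NullS \<union> fst ` C"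
    proof (cases z)
      case (Good c)
      then have "(x, c) \<in> C" using \<open>x \<in> A\<close> z by (auto simp: C_def optimal_def)
      then show ?thesis by force
    qed (use \<open>x \<in> A\<close> z in \<open>auto simp: N_def\<close>)
  next
    fix x assume "x \<in> N NullD \<union> N NullS \<union> fst ` C"
    then show "x \<in> {x\<in>A. optimal Z0 f x \<inter> optimal Z0 g x \<noteq> {}}"
    proof (elim UnE)
      assume "x \<in> fst ` C"
      then obtain c where "x \<in> A" "Good c \<in> optimal Z0 f x \<inter> optimal Z0 g x"
        by (auto simp: C_def)
      then show ?thesis by blast
    qed (auto simp: N_def)
  qed
  then show ?thesis
    using closed_C closed_N[of NullD] closed_N[of NullS] by (simp add: closed_Un)
qed

(* A payoff extended by zero outside A \<times> Z; this makes it a measurable function on the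
   product space even though f is only controlled on A \<times> Z. *)
definition restrict_payoff :: "'a set \<Rightarrow> 'c set \<Rightarrow> ('a \<Rightarrow> 'c ext \<Rightarrow> real) \<Rightarrow> 'a \<times> 'c ext \<Rightarrow> real" where
  "restrict_payoff A Z0 f w = (if fst w \<in> A \<and> snd w \<in> Zset Z0 then f (fst w) (snd w) else 0)"

lemma restrict_payoff_diff:
  "restrict_payoff A Z0 (\<lambda>x z. f x z - g x z) w = restrict_payoff A Z0 f w - restrict_payoff A Z0 g w"
  by (simp add: restrict_payoff_def)

lemma restrict_payoff_measurable:
  fixes A :: "'a::euclidean_space set" and Z0 :: "'c::euclidean_space set"
  assumes f: "cont_payoff A Z0 f" and A: "closed A" and Z0: "closed Z0"
  shows "restrict_payoff A Z0 f \<in> borel_measurable (borel \<Otimes>\<^sub>M Zmeas)"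
proof -
  define fG where "fG w = indicator (A \<times> Z0) w *\<^sub>R f (fst w) (Good (snd w))" for w
  define fD where "fD x = indicator A x *\<^sub>R f x NullD" for x
  define fS where "fS x = indicator A x *\<^sub>R f x NullS" for x
  have [measurable]: "fG \<in> borel_measurable (borel \<Otimes>\<^sub>M borel)"
    unfolding fG_def borel_prod using f A Z0
    by (intro borel_measurable_continuous_on_indicator) (auto simp: cont_payoff_def closed_Times)
  have [measurable]: "fD \<in> borel_measurable borel"
    unfolding fD_def using f A
    by (intro borel_measurable_continuous_on_indicator) (auto simp: cont_payoff_def)
  have [measurable]: "fS \<in> borel_measurable borel"
    unfolding fS_def using f A
    by (intro borel_measurable_continuous_on_indicator) (auto simp: cont_payoff_def)
  have "restrict_payoff A Z0 f = (\<lambda>w. if snd w = NullD then fD (fst w)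
      else if snd w = NullS then fS (fst w) else fG (fst w, the_good (snd w)))"
  proof
    fix w :: "'a \<times> 'c ext"
    show "restrict_payoff A Z0 f w = (if snd w = NullD then fD (fst w)
      else if snd w = NullS then fS (fst w) else fG (fst w, the_good (snd w)))"
      by (cases "snd w")
        (auto simp: restrict_payoff_def fD_def fS_def fG_def the_good_def indicator_def)
  qed
  then show ?thesis by simp
qed

definition value_fun :: "'a set \<Rightarrow> 'c set \<Rightarrow> ('a \<Rightarrow> 'c ext \<Rightarrow> real) \<Rightarrow> 'a \<Rightarrow> real" where
  "value_fun A Z0 f x = (if x \<in> A then (SUP z\<in>Zset Z0. f x z) else 0)"

context
  fixes A :: "'a set" and Z0 :: "'c set" and f :: "'a \<Rightarrow> 'c ext \<Rightarrow> real" and B :: real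
  assumes bound: "\<And>x z. x \<in> A \<Longrightarrow> z \<in> Zset Z0 \<Longrightarrow> \<bar>f x z\<bar> \<le> B"
begin

lemma value_fun_bdd: "x \<in> A \<Longrightarrow> bdd_above (f x ` Zset Z0)"
  using bound by (intro bdd_aboveI[of _ B]) force

lemma value_fun_upper: "x \<in> A \<Longrightarrow> z \<in> Zset Z0 \<Longrightarrow> f x z \<le> value_fun A Z0 f x"
  using value_fun_bdd by (simp add: value_fun_def cSUP_upper)

lemma value_fun_le_iff: "x \<in> A \<Longrightarrow> value_fun A Z0 f x \<le> a \<longleftrightarrow> (\<forall>z\<in>Zset Z0. f x z \<le> a)"
  using value_fun_bdd[of x] by (simp add: value_fun_def cSUP_le_iff[OF Zset_nonempty])

lemma value_fun_bounded: "\<bar>value_fun A Z0 f x\<bar> \<le> \<bar>B\<bar>"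
proof (cases "x \<in> A")
  case True
  have "value_fun A Z0 f x \<le> B"
    using True bound by (auto simp: value_fun_le_iff abs_le_iff)
  moreover have "- B \<le> value_fun A Z0 f x"
    using value_fun_upper[OF True, of NullD] bound[OF True, of NullD] by simp
  ultimately show ?thesis by linarith
qed (simp add: value_fun_def)

lemma value_fun_attained_iff:
  "x \<in> A \<Longrightarrow> z \<in> Zset Z0 \<Longrightarrow> f x z = value_fun A Z0 f x \<longleftrightarrow> z \<in> optimal Z0 f x"
  using value_fun_upper value_fun_le_iff[of x "f x z"]
  by (auto simp: optimal_def intro: order_antisym)

end

(* Sublevel sets of the value function are closed on A, hence it is Borel measurable. *)
lemma value_fun_measurable:
  fixes A :: "'a::euclidean_space set" and Z0 :: "'c::euclidean_space set"
  assumes f: "cont_payoff A Z0 f" and A: "compact A" and Z0: "compact Z0"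
  shows "value_fun A Z0 f \<in> borel_measurable borel"
  unfolding borel_measurable_iff_le
proof
  fix a
  obtain B where B: "\<And>x z. x \<in> A \<Longrightarrow> z \<in> Zset Z0 \<Longrightarrow> \<bar>f x z\<bar> \<le> B"
    using cont_payoff_bounded[OF f A Z0] by blast
  have "{x \<in> space borel. value_fun A Z0 f x \<le> a} =
      {x\<in>A. \<forall>z\<in>Zset Z0. f x z - a \<le> 0} \<union> {x. x \<notin> A \<and> 0 \<le> a}"
    using value_fun_le_iff[of A Z0 f B, OF B] by (auto simp: value_fun_def)
  moreover have "closed {x\<in>A. \<forall>z\<in>Zset Z0. f x z - a \<le> 0}"
    using A cont_payoff_at[OF f]
    by (intro closed_all_le compact_imp_closed) (auto intro!: continuous_intros)
  moreover have "{x. x \<notin> A \<and> 0 \<le> a} \<in> sets borel"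
    using A by (cases "0 \<le> a") (auto simp: Compl_eq[symmetric] compact_imp_closed)
  ultimately show "{x \<in> space borel. value_fun A Z0 f x \<le> a} \<in> sets borel"
    by (simp add: borel_closed sets.Un)
qed

definition plan :: "'a::topological_space set \<Rightarrow> 'c::topological_space set \<Rightarrow> 'a measure
    \<Rightarrow> ('a \<times> 'c ext) measure \<Rightarrow> bool" where
  "plan A Z0 \<rho> M \<longleftrightarrow> sets M = sets (borel \<Otimes>\<^sub>M Zmeas) \<and> distr M borel fst = \<rho> \<and>
     (AE w in M. fst w \<in> A \<and> snd w \<in> Zset Z0)"

lemma measurable_plan_eq:
  "plan A Z0 \<rho> M \<Longrightarrow> measurable M N = measurable (borel \<Otimes>\<^sub>M Zmeas) N"
  unfolding plan_def by (intro measurable_cong_sets) auto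

lemma space_plan: "plan A Z0 \<rho> M \<Longrightarrow> space M = UNIV"
  unfolding plan_def by (metis sets_eq_imp_space_eq space_pair_measure space_Zmeas space_borel UNIV_Times_UNIV)

lemma plan_finite_measure:
  assumes M: "plan A Z0 \<rho> M" and \<rho>: "finite_measure \<rho>"
  shows "finite_measure M"
proof -
  have distr: "distr M borel fst = \<rho>"
    using M by (simp add: plan_def)
  have fst: "fst \<in> measurable M borel"
    unfolding measurable_plan_eq[OF M] by simp
  have "space \<rho> = UNIV"
    unfolding distr[symmetric] by simp
  then have "emeasure M (space M) = emeasure \<rho> (space \<rho>)"
    using emeasure_distr[OF fst, of UNIV] unfolding distr by (simp add: space_plan[OF M])
  then show ?thesis
    using \<rho> by (intro finite_measureI) (simp add: finite_measure.emeasure_finite)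
qed

definition gap :: "'a set \<Rightarrow> 'c set \<Rightarrow> ('a \<Rightarrow> 'c ext \<Rightarrow> real) \<Rightarrow> ('a \<times> 'c ext) measure \<Rightarrow> real" where
  "gap A Z0 f M = (\<integral>w. value_fun A Z0 f (fst w) - restrict_payoff A Z0 f w \<partial>M)"

context
  fixes A :: "'a::euclidean_space set" and Z0 :: "'c::euclidean_space set"
    and f :: "'a \<Rightarrow> 'c ext \<Rightarrow> real" and \<rho> :: "'a measure" and M :: "('a \<times> 'c ext) measure"
  assumes f: "cont_payoff A Z0 f" and A: "compact A" and Z0: "compact Z0"
    and M: "plan A Z0 \<rho> M" and \<rho>: "finite_measure \<rho>"
begin

lemma integrable_restrict_payoff: "integrable M (restrict_payoff A Z0 f)"
proof -
  obtain B where B: "\<And>x z. x \<in> A \<Longrightarrow> z \<in> Zset Z0 \<Longrightarrow> \<bar>f x z\<bar> \<le> B"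
    using cont_payoff_bounded[OF f A Z0] by blast
  have "restrict_payoff A Z0 f \<in> borel_measurable M"
    unfolding measurable_plan_eq[OF M]
    using restrict_payoff_measurable[OF f] A Z0 by (simp add: compact_imp_closed)
  moreover have "\<bar>restrict_payoff A Z0 f w\<bar> \<le> \<bar>B\<bar>" for w
    using B[of "fst w" "snd w"] by (auto simp: restrict_payoff_def)
  ultimately show ?thesis
    by (intro finite_measure.integrable_const_bound[OF plan_finite_measure[OF M \<rho>], of _ "\<bar>B\<bar>"])
      auto
qed

lemma integrable_value_fun: "integrable M (\<lambda>w. value_fun A Z0 f (fst w))"
proof -
  obtain B where B: "\<And>x z. x \<in> A \<Longrightarrow> z \<in> Zset Z0 \<Longrightarrow> \<bar>f x z\<bar> \<le> B"
    using cont_payoff_bounded[OF f A Z0] by blast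
  have "(\<lambda>w. value_fun A Z0 f (fst w)) \<in> borel_measurable M"
    unfolding measurable_plan_eq[OF M] using value_fun_measurable[OF f A Z0] by simp
  then show ?thesis
    using value_fun_bounded[of A Z0 f B, OF B]
    by (intro finite_measure.integrable_const_bound[OF plan_finite_measure[OF M \<rho>], of _ "\<bar>B\<bar>"])
      auto
qed

lemma gap_eq:
  "gap A Z0 f M = (\<integral>x. value_fun A Z0 f x \<partial>\<rho>) - (\<integral>w. restrict_payoff A Z0 f w \<partial>M)"
proof -
  have "(\<integral>w. value_fun A Z0 f (fst w) \<partial>M) = (\<integral>x. value_fun A Z0 f x \<partial>\<rho>)"
    using M integral_distr[of fst M borel "value_fun A Z0 f"] value_fun_measurable[OF f A Z0]
    by (simp add: plan_def measurable_plan_eq[OF M])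
  then show ?thesis
    unfolding gap_def using integrable_value_fun integrable_restrict_payoff by simp
qed

lemma gap_integrand:
  "AE w in M. 0 \<le> value_fun A Z0 f (fst w) - restrict_payoff A Z0 f w \<and>
     (value_fun A Z0 f (fst w) - restrict_payoff A Z0 f w = 0 \<longleftrightarrow> snd w \<in> optimal Z0 f (fst w))"
proof -
  obtain B where B: "\<And>x z. x \<in> A \<Longrightarrow> z \<in> Zset Z0 \<Longrightarrow> \<bar>f x z\<bar> \<le> B"
    using cont_payoff_bounded[OF f A Z0] by blast
  from M have "AE w in M. fst w \<in> A \<and> snd w \<in> Zset Z0" by (simp add: plan_def)
  then show ?thesis
    by eventually_elim
      (auto simp: restrict_payoff_def value_fun_upper[of A Z0 f B, OF B] value_fun_attained_iff[of A Z0 f B, OF B, symmetric])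
qed

lemma gap_nonneg: "0 \<le> gap A Z0 f M"
  unfolding gap_def using gap_integrand by (auto intro: integral_nonneg_AE elim: AE_mp)

lemma gap_eq_0_iff: "gap A Z0 f M = 0 \<longleftrightarrow> (AE w in M. snd w \<in> optimal Z0 f (fst w))"
proof -
  have "gap A Z0 f M = 0 \<longleftrightarrow> (AE w in M. value_fun A Z0 f (fst w) - restrict_payoff A Z0 f w = 0)"
    unfolding gap_def using gap_integrand
    by (intro integral_nonneg_eq_0_iff_AE integrable_value_fun integrable_restrict_payoff
        Bochner_Integration.integrable_diff) (auto elim: AE_mp)
  also have "\<dots> \<longleftrightarrow> (AE w in M. snd w \<in> optimal Z0 f (fst w))"
    by (rule eventually_subst, rule eventually_mono[OF gap_integrand]) auto
  finally show ?thesis .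
qed

end

definition goods_marginal :: "'c::topological_space set \<Rightarrow> ('a \<times> 'c ext) measure \<Rightarrow> 'c ext measure" where
  "goods_marginal Z0 M = density (distr M Zmeas snd) (indicator (Good ` Z0))"

definition same_goods_marginal :: "'c::topological_space set \<Rightarrow> ('a \<times> 'c ext) measure \<Rightarrow> ('b \<times> 'c ext) measure \<Rightarrow> bool"
  where "same_goods_marginal Z0 \<alpha> \<beta> \<longleftrightarrow> (\<forall>B \<in> sets borel. B \<subseteq> Z0 \<longrightarrow>
     emeasure \<alpha> (UNIV \<times> Good ` B) = emeasure \<beta> (UNIV \<times> Good ` B))"

lemma Good_image_sets: "closed Z0 \<Longrightarrow> Good ` Z0 \<in> sets Zmeas"
  by (rule Zmeas_setsI) (simp add: inj_vimage_image_eq inj_def borel_closed)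

lemma emeasure_goods_marginal:
  assumes M: "plan A Z0 \<rho> M" and Z0: "closed Z0" and S: "S \<in> sets Zmeas"
  shows "emeasure (goods_marginal Z0 M) S = emeasure M (UNIV \<times> Good ` (Good -` S \<inter> Z0))"
proof -
  have snd: "snd \<in> measurable M Zmeas"
    unfolding measurable_plan_eq[OF M] by simp
  have G: "Good ` Z0 \<in> sets Zmeas" using Z0 by (rule Good_image_sets)
  have "emeasure (goods_marginal Z0 M) S = emeasure (distr M Zmeas snd) (Good ` Z0 \<inter> S)"
    unfolding goods_marginal_def using S G
    by (simp add: emeasure_density indicator_inter_arith[symmetric] nn_integral_indicator sets.Int)
  also have "\<dots> = emeasure M (snd -` (Good ` Z0 \<inter> S) \<inter> space M)"
    using S G by (simp add: emeasure_distr[OF snd])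
  also have "snd -` (Good ` Z0 \<inter> S) \<inter> space M = UNIV \<times> Good ` (Good -` S \<inter> Z0)"
    by (auto simp: space_plan[OF M])
  finally show ?thesis .
qed

lemma goods_marginal_eq:
  assumes \<alpha>: "plan A Z0 \<rho> \<alpha>" and \<beta>: "plan B Z0 \<sigma> \<beta>" and Z0: "closed Z0"
    and bal: "same_goods_marginal Z0 \<alpha> \<beta>"
  shows "goods_marginal Z0 \<alpha> = goods_marginal Z0 \<beta>"
proof (rule measure_eqI)
  fix S assume "S \<in> sets (goods_marginal Z0 \<alpha>)"
  then have S: "S \<in> sets Zmeas" by (simp add: goods_marginal_def)
  have "Good -` S \<inter> Z0 \<in> sets borel"
    using measurable_sets[OF Good_measurable S] Z0 by (auto simp: borel_closed)
  then show "emeasure (goods_marginal Z0 \<alpha>) S = emeasure (goods_marginal Z0 \<beta>) S"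
    using bal by (simp add: emeasure_goods_marginal[OF \<alpha> Z0 S] emeasure_goods_marginal[OF \<beta> Z0 S]
        same_goods_marginal_def)
qed (simp add: goods_marginal_def)

lemma integral_price_plan:
  fixes A :: "'a::euclidean_space set" and Z0 :: "'c::euclidean_space set"
  assumes p: "price_system Z0 p" and M: "plan A Z0 \<rho> M" and A: "closed A" and Z0: "closed Z0"
  shows "(\<integral>w. restrict_payoff A Z0 (\<lambda>x z. p z) w \<partial>M) =
         (\<integral>z. indicator (Good ` Z0) z * p z \<partial>goods_marginal Z0 M)"
proof -
  define q where "q z = indicator (Good ` Z0) z * p z" for z
  have q: "q \<in> borel_measurable Zmeas"
  proof (rule Zmeas_measurableI)
    have "(\<lambda>c. indicator Z0 c *\<^sub>R (p \<circ> Good) c) \<in> borel_measurable borel"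
      using p Z0 by (intro borel_measurable_continuous_on_indicator) (auto simp: price_system_def)
    moreover have "(\<lambda>c. q (Good c)) = (\<lambda>c. indicator Z0 c *\<^sub>R (p \<circ> Good) c)"
      by (auto simp: q_def indicator_def)
    ultimately show "(\<lambda>c. q (Good c)) \<in> borel_measurable borel" by simp
  qed
  have snd: "snd \<in> measurable M Zmeas"
    unfolding measurable_plan_eq[OF M] by simp
  have "AE w in M. restrict_payoff A Z0 (\<lambda>x z. p z) w = q (snd w)"
    using M p unfolding plan_def
    by (auto elim!: AE_mp simp: restrict_payoff_def q_def Zset_def price_system_def)
  then have "(\<integral>w. restrict_payoff A Z0 (\<lambda>x z. p z) w \<partial>M) = (\<integral>w. q (snd w) \<partial>M)"
    using restrict_payoff_measurable[OF cont_payoff_price A Z0] p measurable_compose[OF snd q]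
    by (intro integral_cong_AE) (auto simp: measurable_plan_eq[OF M] price_system_def comp_def)
  also have "\<dots> = (\<integral>z. q z \<partial>distr M Zmeas snd)"
    by (rule integral_distr[OF snd q, symmetric])
  also have "\<dots> = (\<integral>z. indicator (Good ` Z0) z *\<^sub>R q z \<partial>distr M Zmeas snd)"
    by (rule Bochner_Integration.integral_cong) (auto simp: q_def indicator_def)
  also have "\<dots> = (\<integral>z. q z \<partial>density (distr M Zmeas snd) (\<lambda>z. ennreal (indicator (Good ` Z0) z)))"
    using Good_image_sets[OF Z0] q by (intro integral_density[symmetric]) auto
  finally show ?thesis by (simp add: q_def goods_marginal_def ennreal_indicator)
qed

lemma price_balance:
  fixes X :: "'a::euclidean_space set" and Y :: "'b::euclidean_space set" and Z0 :: "'c::euclidean_space set"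
  assumes p: "price_system Z0 p" and \<alpha>: "plan X Z0 \<mu> \<alpha>" and \<beta>: "plan Y Z0 \<nu> \<beta>"
    and X: "closed X" and Y: "closed Y" and Z0: "closed Z0" and bal: "same_goods_marginal Z0 \<alpha> \<beta>"
  shows "(\<integral>w. restrict_payoff X Z0 (\<lambda>x z. p z) w \<partial>\<alpha>) = (\<integral>w. restrict_payoff Y Z0 (\<lambda>y z. p z) w \<partial>\<beta>)"
  using integral_price_plan[OF p \<alpha> X Z0] integral_price_plan[OF p \<beta> Y Z0]
    goods_marginal_eq[OF \<alpha> \<beta> Z0 bal] by simp

definition dual_value :: "'a set \<Rightarrow> 'b set \<Rightarrow> 'c set \<Rightarrow> 'a measure \<Rightarrow> 'b measure
    \<Rightarrow> ('a \<Rightarrow> 'c \<Rightarrow> real) \<Rightarrow> ('b \<Rightarrow> 'c \<Rightarrow> real) \<Rightarrow> ('c ext \<Rightarrow> real) \<Rightarrow> real" where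
  "dual_value X Y Z0 \<mu> \<nu> u v p =
     (\<integral>x. value_fun X Z0 (\<lambda>x z. uZ u x z - p z) x \<partial>\<mu>) + (\<integral>y. value_fun Y Z0 (\<lambda>y z. p z - vZ v y z) y \<partial>\<nu>)"

definition welfare :: "'a set \<Rightarrow> 'b set \<Rightarrow> 'c set \<Rightarrow> ('a \<Rightarrow> 'c \<Rightarrow> real) \<Rightarrow> ('b \<Rightarrow> 'c \<Rightarrow> real)
    \<Rightarrow> ('a \<times> 'c ext) measure \<Rightarrow> ('b \<times> 'c ext) measure \<Rightarrow> real" where
  "welfare X Y Z0 u v \<alpha> \<beta> =
     (\<integral>w. restrict_payoff X Z0 (uZ u) w \<partial>\<alpha>) - (\<integral>w. restrict_payoff Y Z0 (vZ v) w \<partial>\<beta>)"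

lemma equilibriumD:
  assumes "equilibrium X Y Z0 \<mu> \<nu> u v p \<alpha> \<beta>"
  shows "price_system Z0 p" "plan X Z0 \<mu> \<alpha>" "plan Y Z0 \<nu> \<beta>" "same_goods_marginal Z0 \<alpha> \<beta>"
    and "AE w in \<alpha>. snd w \<in> demand_map Z0 u p (fst w)"
    and "AE w in \<beta>. snd w \<in> supply_map Z0 v p (fst w)"
  using assms
  by (auto simp: equilibrium_def admissible_def demand_dist_def supply_dist_def plan_def
      same_goods_marginal_def demand_map_def supply_map_def elim!: AE_mp)

context
  fixes X :: "'a::euclidean_space set" and Y :: "'b::euclidean_space set" and Z0 :: "'c::euclidean_space set"
    and \<mu> :: "'a measure" and \<nu> :: "'b measure" and u :: "'a \<Rightarrow> 'c \<Rightarrow> real" and v :: "'b \<Rightarrow> 'c \<Rightarrow> real"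
  assumes X: "compact X" and Y: "compact Y" and Z0: "compact Z0"
    and \<mu>: "finite_measure \<mu>" and \<nu>: "finite_measure \<nu>"
    and u: "cont_payoff X Z0 (uZ u)" and v: "cont_payoff Y Z0 (vZ v)"
begin

lemma gap_duality:
  assumes p: "price_system Z0 p" and \<alpha>: "plan X Z0 \<mu> \<alpha>" and \<beta>: "plan Y Z0 \<nu> \<beta>"
    and bal: "same_goods_marginal Z0 \<alpha> \<beta>"
  shows "gap X Z0 (\<lambda>x z. uZ u x z - p z) \<alpha> + gap Y Z0 (\<lambda>y z. p z - vZ v y z) \<beta> =
         dual_value X Y Z0 \<mu> \<nu> u v p - welfare X Y Z0 u v \<alpha> \<beta>"
proof -
  have pX: "cont_payoff X Z0 (\<lambda>x z. p z)" and pY: "cont_payoff Y Z0 (\<lambda>y z. p z)"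
    using p by (auto intro: cont_payoff_price simp: price_system_def)
  have "(\<integral>w. restrict_payoff X Z0 (\<lambda>x z. uZ u x z - p z) w \<partial>\<alpha>) =
      (\<integral>w. restrict_payoff X Z0 (uZ u) w \<partial>\<alpha>) - (\<integral>w. restrict_payoff X Z0 (\<lambda>x z. p z) w \<partial>\<alpha>)"
    unfolding restrict_payoff_diff
    by (intro Bochner_Integration.integral_diff integrable_restrict_payoff[OF _ X Z0 \<alpha> \<mu>] u pX)
  moreover have "(\<integral>w. restrict_payoff Y Z0 (\<lambda>y z. p z - vZ v y z) w \<partial>\<beta>) =
      (\<integral>w. restrict_payoff Y Z0 (\<lambda>y z. p z) w \<partial>\<beta>) - (\<integral>w. restrict_payoff Y Z0 (vZ v) w \<partial>\<beta>)"
    unfolding restrict_payoff_diff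
    by (intro Bochner_Integration.integral_diff integrable_restrict_payoff[OF _ Y Z0 \<beta> \<nu>] v pY)
  moreover note price_balance[OF p \<alpha> \<beta>] X Y Z0
  ultimately show ?thesis
    using gap_eq[OF cont_payoff_diff[OF u pX] X Z0 \<alpha> \<mu>] gap_eq[OF cont_payoff_diff[OF pY v] Y Z0 \<beta> \<nu>]
    by (simp add: dual_value_def welfare_def compact_imp_closed bal)
qed

(* At an equilibrium all agents choose optimally, so the dual value equals the welfare. *)
lemma equilibrium_dual_value:
  assumes eq: "equilibrium X Y Z0 \<mu> \<nu> u v p \<alpha> \<beta>"
  shows "dual_value X Y Z0 \<mu> \<nu> u v p = welfare X Y Z0 u v \<alpha> \<beta>"
proof -
  note E = equilibriumD[OF eq]
  have pX: "cont_payoff X Z0 (\<lambda>x z. p z)" and pY: "cont_payoff Y Z0 (\<lambda>y z. p z)"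
    using E(1) by (auto intro: cont_payoff_price simp: price_system_def)
  have "gap X Z0 (\<lambda>x z. uZ u x z - p z) \<alpha> = 0"
    using E(5) by (simp add: gap_eq_0_iff[OF cont_payoff_diff[OF u pX] X Z0 E(2) \<mu>] demand_map_optimal)
  moreover have "gap Y Z0 (\<lambda>y z. p z - vZ v y z) \<beta> = 0"
    using E(6) by (simp add: gap_eq_0_iff[OF cont_payoff_diff[OF pY v] Y Z0 E(3) \<nu>] supply_map_optimal)
  ultimately show ?thesis
    using gap_duality[OF E(1-4)] by simp
qed

(* Crosswise duality: the demand distribution of one equilibrium is carried by the
   demand map of any other equilibrium. *)
lemma equilibrium_cross_demand:
  assumes eq1: "equilibrium X Y Z0 \<mu> \<nu> u v p1 \<alpha>1 \<beta>1"
    and eq2: "equilibrium X Y Z0 \<mu> \<nu> u v p2 \<alpha>2 \<beta>2"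
  shows "AE w in \<alpha>2. snd w \<in> demand_map Z0 u p1 (fst w)"
proof -
  note E1 = equilibriumD[OF eq1] and E2 = equilibriumD[OF eq2]
  have p1X: "cont_payoff X Z0 (\<lambda>x z. p1 z)" and p2Y: "cont_payoff Y Z0 (\<lambda>y z. p2 z)"
    and p1Y: "cont_payoff Y Z0 (\<lambda>y z. p1 z)" and p2X: "cont_payoff X Z0 (\<lambda>x z. p2 z)"
    using E1(1) E2(1) by (auto intro: cont_payoff_price simp: price_system_def)
  let ?gD = "gap X Z0 (\<lambda>x z. uZ u x z - p1 z) \<alpha>2"
  have "?gD + gap Y Z0 (\<lambda>y z. p1 z - vZ v y z) \<beta>2 +
      (gap X Z0 (\<lambda>x z. uZ u x z - p2 z) \<alpha>1 + gap Y Z0 (\<lambda>y z. p2 z - vZ v y z) \<beta>1) = 0"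
    using gap_duality[OF E1(1) E2(2,3,4)] gap_duality[OF E2(1) E1(2,3,4)]
      equilibrium_dual_value[OF eq1] equilibrium_dual_value[OF eq2] by simp
  moreover have "0 \<le> gap Y Z0 (\<lambda>y z. p1 z - vZ v y z) \<beta>2"
    "0 \<le> gap X Z0 (\<lambda>x z. uZ u x z - p2 z) \<alpha>1" "0 \<le> gap Y Z0 (\<lambda>y z. p2 z - vZ v y z) \<beta>1"
    using gap_nonneg[OF cont_payoff_diff[OF p1Y v] Y Z0 E2(3) \<nu>]
      gap_nonneg[OF cont_payoff_diff[OF u p2X] X Z0 E1(2) \<mu>]
      gap_nonneg[OF cont_payoff_diff[OF p2Y v] Y Z0 E1(3) \<nu>] by auto
  moreover have "0 \<le> ?gD"
    using gap_nonneg[OF cont_payoff_diff[OF u p1X] X Z0 E2(2) \<mu>] .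
  ultimately have "?gD = 0" by linarith
  then show ?thesis
    by (simp add: gap_eq_0_iff[OF cont_payoff_diff[OF u p1X] X Z0 E2(2) \<mu>] demand_map_optimal)
qed

(* Hence \<mu>-almost every agent has a choice that is demanded at both equilibrium prices:
   the set of such agents is closed and contains the first marginal of \<alpha>2. *)
lemma common_demand_ae:
  assumes eq1: "equilibrium X Y Z0 \<mu> \<nu> u v p1 \<alpha>1 \<beta>1"
    and eq2: "equilibrium X Y Z0 \<mu> \<nu> u v p2 \<alpha>2 \<beta>2"
  shows "AE x in \<mu>. demand_map Z0 u p1 x \<inter> demand_map Z0 u p2 x \<noteq> {}"
proof -
  note E2 = equilibriumD[OF eq2]
  define E where "E = {x\<in>X. demand_map Z0 u p1 x \<inter> demand_map Z0 u p2 x \<noteq> {}}"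
  have "closed E"
    unfolding E_def demand_map_optimal using X Z0 equilibriumD(1)[OF eq1] E2(1)
    by (intro closed_common_optimal cont_payoff_diff u cont_payoff_price) (auto simp: price_system_def)
  have fst: "fst \<in> measurable \<alpha>2 borel"
    unfolding measurable_plan_eq[OF E2(2)] by simp
  have "AE w in \<alpha>2. fst w \<in> E"
    using equilibrium_cross_demand[OF eq1 eq2] E2(5) E2(2)[unfolded plan_def]
    by (auto simp: E_def)
  then have "AE x in distr \<alpha>2 borel fst. x \<in> E"
    using \<open>closed E\<close> by (subst AE_distr_iff[OF fst]) (auto simp: borel_closed)
  then show ?thesis
    using E2(2) by (auto simp: plan_def E_def elim!: AE_mp)
qed

end

theorem mainTheorem4:
  fixes X :: "'a::euclidean_space set" and Y :: "'b::euclidean_space set"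
    and Z0 :: "'c::euclidean_space set"
    and \<mu> :: "'a measure" and \<nu> :: "'b measure"
    and u :: "'a \<Rightarrow> 'c \<Rightarrow> real" and v :: "'b \<Rightarrow> 'c \<Rightarrow> real"
    and p1 p2 :: "'c ext \<Rightarrow> real"
    and \<alpha>1 \<alpha>2 :: "('a \<times> 'c ext) measure" and \<beta>1 \<beta>2 :: "('b \<times> 'c ext) measure"
  assumes "compact X" "compact Y" "compact Z0" "X \<noteq> {}" "Y \<noteq> {}"
    and "sets \<mu> = sets borel" "finite_measure \<mu>" "emeasure \<mu> (- X) = 0"
    and "sets \<nu> = sets borel" "finite_measure \<nu>" "emeasure \<nu> (- Y) = 0"
    and "regular_util X Z0 u" "regular_util Y Z0 v"
    and "equilibrium X Y Z0 \<mu> \<nu> u v p1 \<alpha>1 \<beta>1"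
    and "equilibrium X Y Z0 \<mu> \<nu> u v p2 \<alpha>2 \<beta>2"
  shows "AE x in \<mu>. \<forall>d1. demand_map Z0 u p1 x = {d1} \<longrightarrow>
           (d1 \<in> demand_map Z0 u p2 x \<and> (\<forall>d2. demand_map Z0 u p2 x = {d2} \<longrightarrow> d1 = d2))"
proof -
  have u: "cont_payoff X Z0 (uZ u)"
    using assms(12) by (intro cont_payoff_uZ regular_util_continuous)
  have v: "cont_payoff Y Z0 (vZ v)"
    using assms(13) by (intro cont_payoff_vZ regular_util_continuous)
  have "AE x in \<mu>. demand_map Z0 u p1 x \<inter> demand_map Z0 u p2 x \<noteq> {}"
    by (rule common_demand_ae[OF assms(1-3,7,10) u v assms(14,15)])
  then show ?thesis by eventually_elim auto
qed

end
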